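(* Let $(T,\sigma)$ be a confluent temperature-1 TAS whose maximal producible assembly $\alpha_{\max}$ has a binding graph containing $\mathrm{Grid}(m,p,q)$. Let $r$ be a non-empty finite free path and $A\in\mathbb Z^2$. If the path $A.r^{\omega}$ is a subgraph of the binding graph of $\alpha_{\max}$, then there is a vertex $B\in\mathbb Z^2$ such that the bi-infinite path ${}^{\omega}r.B.r^{\omega}$ is a subgraph of the binding graph of $\alpha_{\max}$.
   Context: Directions $D=\{E=(1,0),N=(0,1),S=(0,-1),W=(-1,0)\}$; $\mathbb Z^2$ is the grid graph; a free path is a word over $D$ whose walk is simple; $A.m$ is the path from $A$ following $m$; $\vec m$ is the displacement of finite $m$; ${}^\omega r.B.r^\omega$ is the bi-infinite path through $B$ following $r$ periodically in both directions. Grid: for finite free paths $m,p,q$ with $\vec p,\vec q$ not collinear and ${}^\omega p^\omega$, ${}^\omega q^\omega$ free paths, $\mathrm{Grid}(m,p,q)$ is the union over $i,j\in\mathbb Z$ of the paths ${}^\omega p.(\vec m+i\vec p+j\vec q).p^\omega$ and ${}^\omega q.(\vec m+i\vec p+j\vec q).q^\omega$. Tile assembly: tile type $t:D\to\Sigma$; temperature-1 TAS $(T,\sigma)$; assembly = partial map $\alpha:\mathbb Z^2\to T\cup\{\sigma\}$; binding graph edge $\{v,v+d\}$ iff $\alpha(v)_d=\alpha(v+d)_{-d}$; producible = connected binding graph with $\alpha((0,0))=\sigma$; confluent = any two producible assemblies agree on common domain; $\alpha_{\max}$ the unique maximal producible assembly. *)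

theory Defs
  imports Main
begin

type_synonym pt = "int \<times> int"

datatype dir = E | N | S | W

fun dvec :: "dir \<Rightarrow> pt" where
  "dvec E = (1, 0)" | "dvec N = (0, 1)" | "dvec S = (0, -1)" | "dvec W = (-1, 0)"

fun opp :: "dir \<Rightarrow> dir" where
  "opp E = W" | "opp W = E" | "opp N = S" | "opp S = N"

definition padd :: "pt \<Rightarrow> pt \<Rightarrow> pt" where
  "padd a b = (fst a + fst b, snd a + snd b)"

definition psmul :: "int \<Rightarrow> pt \<Rightarrow> pt" where
  "psmul k a = (k * fst a, k * snd a)"

definition disp :: "dir list \<Rightarrow> pt" where
  "disp m = foldr (\<lambda>d acc. padd (dvec d) acc) m (0, 0)"

definition free_fin :: "dir list \<Rightarrow> bool" where
  "free_fin m \<longleftrightarrow> inj_on (\<lambda>i. disp (take i m)) {0..length m}"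

text \<open>Vertex number i (i an integer) of the periodic walk following r which is at X at index 0.
  Restricted to indices i \<ge> 0 it is the path X.r^omega; on all of the integers it is the
  bi-infinite path ^omega r.X.r^omega.  Consecutive vertices differ by dvec (r ! (i mod |r|)).\<close>
definition per_pos :: "pt \<Rightarrow> dir list \<Rightarrow> int \<Rightarrow> pt" where
  "per_pos X r i =
     padd X (padd (psmul (i div int (length r)) (disp r))
                  (disp (take (nat (i mod int (length r))) r)))"

definition free_biinf :: "dir list \<Rightarrow> bool" where
  "free_biinf p \<longleftrightarrow> p \<noteq> [] \<and> inj (per_pos (0, 0) p)"

type_synonym 'g tile = "dir \<Rightarrow> 'g"
type_synonym 'g assembly = "pt \<Rightarrow> 'g tile option"

definition binds :: "'g assembly \<Rightarrow> pt \<Rightarrow> dir \<Rightarrow> bool" where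
  "binds \<alpha> v d \<longleftrightarrow> (\<exists>t u. \<alpha> v = Some t \<and> \<alpha> (padd v (dvec d)) = Some u \<and> t d = u (opp d))"

definition bg_edge :: "'g assembly \<Rightarrow> pt \<Rightarrow> pt \<Rightarrow> bool" where
  "bg_edge \<alpha> v w \<longleftrightarrow> (\<exists>d. w = padd v (dvec d) \<and> binds \<alpha> v d)"

definition path_sub :: "'g assembly \<Rightarrow> int set \<Rightarrow> (int \<Rightarrow> pt) \<Rightarrow> bool" where
  "path_sub \<alpha> I f \<longleftrightarrow> (\<forall>i\<in>I. f i \<in> dom \<alpha>) \<and>
     (\<forall>i. i \<in> I \<and> i + 1 \<in> I \<longrightarrow> bg_edge \<alpha> (f i) (f (i + 1)))"

definition producible :: "'g tile set \<Rightarrow> 'g tile \<Rightarrow> 'g assembly \<Rightarrow> bool" where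
  "producible T \<sigma> \<alpha> \<longleftrightarrow> \<alpha> (0, 0) = Some \<sigma> \<and> ran \<alpha> \<subseteq> insert \<sigma> T \<and>
     (\<forall>v\<in>dom \<alpha>. ((0, 0), v) \<in> {(x, y). bg_edge \<alpha> x y}\<^sup>*)"

definition confluent :: "'g tile set \<Rightarrow> 'g tile \<Rightarrow> bool" where
  "confluent T \<sigma> \<longleftrightarrow> (\<forall>\<alpha> \<beta>. producible T \<sigma> \<alpha> \<longrightarrow> producible T \<sigma> \<beta> \<longrightarrow>
      (\<forall>v\<in>dom \<alpha> \<inter> dom \<beta>. \<alpha> v = \<beta> v))"

definition is_max_producible :: "'g tile set \<Rightarrow> 'g tile \<Rightarrow> 'g assembly \<Rightarrow> bool" where
  "is_max_producible T \<sigma> \<alpha> \<longleftrightarrow> producible T \<sigma> \<alpha> \<and>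
     (\<forall>\<beta>. producible T \<sigma> \<beta> \<longrightarrow> \<beta> \<subseteq>\<^sub>m \<alpha>)"

definition grid_ok :: "dir list \<Rightarrow> dir list \<Rightarrow> dir list \<Rightarrow> bool" where
  "grid_ok m p q \<longleftrightarrow> free_fin m \<and> free_fin p \<and> free_fin q \<and>
     fst (disp p) * snd (disp q) - snd (disp p) * fst (disp q) \<noteq> 0 \<and>
     free_biinf p \<and> free_biinf q"

definition grid_sub :: "'g assembly \<Rightarrow> dir list \<Rightarrow> dir list \<Rightarrow> dir list \<Rightarrow> bool" where
  "grid_sub \<alpha> m p q \<longleftrightarrow> (\<forall>i j::int.
     path_sub \<alpha> UNIV (per_pos (padd (disp m) (padd (psmul i (disp p)) (psmul j (disp q)))) p) \<and>
     path_sub \<alpha> UNIV (per_pos (padd (disp m) (padd (psmul i (disp p)) (psmul j (disp q)))) q))"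

end

theory Submission
  imports Defs "HOL-Library.Infinite_Set"
begin

text \<open>Removing one vertex \<open>w\<close> cannot cut the seed off from the grid, except for \<open>w\<close> in a
  finite set \<open>F\<close>: every grid line meets \<open>w\<close> at most once and lines far from \<open>w\<close> miss it.
  Hence the maximal assembly copies a walk under every translation that sends its start to a
  grid point with the same tile and keeps the walk away from \<open>F\<close>, each new tile being forced
  by its predecessor.  Choose rows of grid points lying at increasing distance from the line of
  \<open>r\<close>, each row parallel to \<open>r\<close>; by pigeonhole one tile occurs infinitely often in infinitely many
  rows.  A walk from one occurrence into the ray \<open>A.r\<^sup>\<omega>\<close> stays in a strip parallel to \<open>r\<close>, so
  its translates to the occurrences in a distant row copy the ray shifted backwards by
  arbitrarily many periods, and these copies together form the bi-infinite path.\<close>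

section \<open>Plane vectors and periodic walks\<close>

lemma padd_zero [simp]: "padd (0, 0) x = x" "padd x (0, 0) = x"
  by (auto simp: padd_def)

lemma disp_Nil [simp]: "disp [] = (0, 0)"
  by (simp add: disp_def)

definition pcross :: "pt \<Rightarrow> pt \<Rightarrow> int" where
  "pcross a b = fst a * snd b - snd a * fst b"

lemma pcross_padd [simp]: "pcross a (padd b c) = pcross a b + pcross a c"
  by (simp add: pcross_def padd_def algebra_simps)

lemma pcross_psmul [simp]: "pcross a (psmul k b) = k * pcross a b"
  by (simp add: pcross_def psmul_def algebra_simps)

lemma pcross_self [simp]: "pcross a a = 0"
  by (simp add: pcross_def)

lemma pcross_cramer:
  "pcross P Q * pcross P Q * fst v = pcross P Q * pcross v Q * fst P - pcross P Q * pcross v P * fst Q"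
  "pcross P Q * pcross P Q * snd v = pcross P Q * pcross v Q * snd P - pcross P Q * pcross v P * snd Q"
  unfolding pcross_def by algebra+

lemma pcross_nonzero_of_independent:
  assumes "pcross P Q \<noteq> 0" and "v \<noteq> (0, 0)"
  shows "pcross v P \<noteq> 0 \<or> pcross v Q \<noteq> 0"
proof (rule ccontr)
  assume "\<not> (pcross v P \<noteq> 0 \<or> pcross v Q \<noteq> 0)"
  then have "pcross P Q * pcross P Q * fst v = 0" "pcross P Q * pcross P Q * snd v = 0"
    using pcross_cramer[of P Q v] by simp_all
  then show False
    using assms by (simp add: prod_eq_iff)
qed

lemma finite_int_set_bounded: "finite (Z :: int set) \<Longrightarrow> \<exists>M\<ge>0. \<forall>x\<in>Z. \<bar>x\<bar> \<le> M"
  by (intro exI[of _ "Max (insert 0 (abs ` Z))"]) auto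

lemma finite_range_disp_take: "finite (range (\<lambda>t. disp (take t p)))"
proof -
  have "range (\<lambda>t. disp (take t p)) \<subseteq> (\<lambda>t. disp (take t p)) ` {..length p}"
    by (auto simp: image_iff) (metis atMost_iff nat_le_linear take_all)
  then show ?thesis
    by (rule finite_subset) simp
qed

lemma disp_nonzero:
  assumes "free_fin r" and "r \<noteq> []"
  shows "disp r \<noteq> (0, 0)"
proof
  assume "disp r = (0, 0)"
  then have "(\<lambda>i. disp (take i r)) 0 = (\<lambda>i. disp (take i r)) (length r)"
    by simp
  then have "0 = length r"
    by (rule inj_onD[OF assms(1)[unfolded free_fin_def]]) auto
  then show False
    using assms(2) by simp
qed

lemma per_pos_0 [simp]: "per_pos X r 0 = X"
  by (simp add: per_pos_def psmul_def padd_def)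

lemma per_pos_translate: "per_pos (padd X Y) r j = padd (per_pos X r j) Y"
  by (simp add: per_pos_def padd_def algebra_simps)

lemma per_pos_shift:
  assumes "r \<noteq> []"
  shows "per_pos X r (j + t * int (length r)) = padd (per_pos X r j) (psmul t (disp r))"
proof -
  have "(j + t * int (length r)) div int (length r) = t + j div int (length r)"
    using assms by simp
  then show ?thesis
    by (simp add: per_pos_def padd_def psmul_def algebra_simps)
qed

lemma per_pos_mult_length:
  "r \<noteq> [] \<Longrightarrow> per_pos X r (t * int (length r)) = padd X (psmul t (disp r))"
  using per_pos_shift[of r X 0 t] by simp

lemma per_pos_eq_iff:
  assumes "free_biinf p"
  shows "per_pos X p k = per_pos X p k' \<longleftrightarrow> k = k'"
proof
  assume "per_pos X p k = per_pos X p k'"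
  then have "per_pos (0, 0) p k = per_pos (0, 0) p k'"
    using per_pos_translate[of "(0, 0)" X p] by (simp add: padd_def prod_eq_iff)
  then show "k = k'"
    using assms unfolding free_biinf_def by (meson injD)
qed simp

lemma pcross_per_pos_bounded:
  "\<exists>M. \<forall>X k. \<bar>pcross (disp p) (per_pos X p k) - pcross (disp p) X\<bar> \<le> M"
proof -
  have "finite (pcross (disp p) ` range (\<lambda>t. disp (take t p)))"
    using finite_range_disp_take by simp
  then obtain M where "\<forall>t. \<bar>pcross (disp p) (disp (take t p))\<bar> \<le> M"
    by (blast dest: finite_int_set_bounded)
  then show ?thesis
    by (auto simp: per_pos_def)
qed

section \<open>Walks in the binding graph\<close>

lemma opp_opp [simp]: "opp (opp d) = d"
  by (cases d) auto

lemma padd_dvec_opp: "padd (padd x (dvec d)) (dvec (opp d)) = x"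
  by (cases d) (auto simp: padd_def)

lemma bg_edge_sym: "bg_edge \<alpha> x y \<Longrightarrow> bg_edge \<alpha> y x"
  unfolding bg_edge_def binds_def by (metis padd_dvec_opp opp_opp)

lemma bg_edge_dom: "bg_edge \<alpha> x y \<Longrightarrow> x \<in> dom \<alpha> \<and> y \<in> dom \<alpha>"
  by (auto simp: bg_edge_def binds_def)

lemma bg_edge_cong:
  "bg_edge \<alpha> x y \<Longrightarrow> \<beta> x = \<alpha> x \<Longrightarrow> \<beta> y = \<alpha> y \<Longrightarrow> bg_edge \<beta> x y"
  by (auto simp: bg_edge_def binds_def)

lemma bg_edge_translate:
  assumes "bg_edge \<alpha> x y" and "\<alpha> (padd x l) = \<alpha> x" and "\<alpha> (padd y l) = \<alpha> y"
  shows "bg_edge \<alpha> (padd x l) (padd y l)"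
proof -
  obtain d where d: "y = padd x (dvec d)" "binds \<alpha> x d"
    using assms(1) by (auto simp: bg_edge_def)
  then have "padd y l = padd (padd x l) (dvec d)"
    by (simp add: padd_def algebra_simps)
  with d assms(2,3) show ?thesis
    by (auto simp: bg_edge_def binds_def)
qed

lemma bg_rtrancl_sym: "(x, y) \<in> {(u, v). bg_edge \<alpha> u v}\<^sup>* \<Longrightarrow> (y, x) \<in> {(u, v). bg_edge \<alpha> u v}\<^sup>*"
  by (metis (no_types, lifting) bg_edge_sym case_prodD case_prodI mem_Collect_eq sym_rtrancl symD symI)

definition bg_avoid :: "'g assembly \<Rightarrow> pt \<Rightarrow> (pt \<times> pt) set" where
  "bg_avoid \<alpha> w = {(x, y). bg_edge \<alpha> x y \<and> x \<noteq> w \<and> y \<noteq> w}"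

lemma sym_bg_avoid: "sym (bg_avoid \<alpha> w)"
  unfolding bg_avoid_def sym_def using bg_edge_sym by blast

lemma bg_avoid_rtrancl_sym: "(x, y) \<in> (bg_avoid \<alpha> w)\<^sup>* \<Longrightarrow> (y, x) \<in> (bg_avoid \<alpha> w)\<^sup>*"
  by (meson sym_bg_avoid sym_rtrancl symD)

lemma bg_avoid_rtrancl_avoids:
  assumes "(x, y) \<in> (bg_avoid \<alpha> w)\<^sup>*" and "x \<noteq> w"
  shows "y \<noteq> w"
  using assms by (induction rule: rtrancl_induct) (auto simp: bg_avoid_def)

lemma rtrancl_bg_avoid_cofinite:
  assumes "(x, y) \<in> {(u, v). bg_edge \<alpha> u v}\<^sup>*"
  shows "\<exists>F. finite F \<and> x \<in> F \<and> y \<in> F \<and> (\<forall>w. w \<notin> F \<longrightarrow> (x, y) \<in> (bg_avoid \<alpha> w)\<^sup>*)"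
  using assms
proof (induction rule: rtrancl_induct)
  case base
  show ?case
    by (intro exI[of _ "{x}"]) auto
next
  case (step y z)
  then obtain F where F: "finite F" "x \<in> F" "y \<in> F" "\<forall>w. w \<notin> F \<longrightarrow> (x, y) \<in> (bg_avoid \<alpha> w)\<^sup>*"
    by blast
  have "(x, z) \<in> (bg_avoid \<alpha> w)\<^sup>*" if "w \<notin> insert z F" for w
  proof -
    have "(y, z) \<in> bg_avoid \<alpha> w"
      using F(3) that step(2) by (auto simp: bg_avoid_def)
    with F(4) that show ?thesis
      by (meson insertCI rtrancl_into_rtrancl)
  qed
  with F show ?case
    by (intro exI[of _ "insert z F"]) auto
qed

lemma path_sub_segment_avoid_up:
  assumes "path_sub \<alpha> UNIV f" and "i \<le> j" and "\<forall>t. i \<le> t \<and> t \<le> j \<longrightarrow> f t \<noteq> w"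
  shows "(f i, f j) \<in> (bg_avoid \<alpha> w)\<^sup>*"
  using assms(2,3)
proof (induction j rule: int_ge_induct)
  case (step j)
  then have "(f j, f (j + 1)) \<in> bg_avoid \<alpha> w"
    using assms(1) unfolding path_sub_def bg_avoid_def by auto
  with step show ?case
    by (auto intro: rtrancl_into_rtrancl)
qed simp

lemma path_sub_segment_avoid:
  assumes "path_sub \<alpha> UNIV f" and "\<forall>t. min i j \<le> t \<and> t \<le> max i j \<longrightarrow> f t \<noteq> w"
  shows "(f i, f j) \<in> (bg_avoid \<alpha> w)\<^sup>*"
proof (cases "i \<le> j")
  case True
  then show ?thesis
    using path_sub_segment_avoid_up[OF assms(1)] assms(2) by auto
next
  case False
  then have "(f j, f i) \<in> (bg_avoid \<alpha> w)\<^sup>*"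
    using path_sub_segment_avoid_up[OF assms(1), of j i] assms(2) by auto
  then show ?thesis
    by (rule bg_avoid_rtrancl_sym)
qed

lemma pcross_bounded_of_eventually_per_pos:
  assumes "\<And>k. n0 \<le> k \<Longrightarrow> Y k = per_pos A r (int (k - n0))"
  shows "\<exists>K. \<forall>k. \<bar>pcross (disp r) (Y k)\<bar> \<le> K"
proof -
  obtain M where M: "\<forall>X k. \<bar>pcross (disp r) (per_pos X r k) - pcross (disp r) X\<bar> \<le> M"
    using pcross_per_pos_bounded by blast
  obtain K where K: "K \<ge> 0" "\<forall>x\<in>pcross (disp r) ` Y ` {..<n0}. \<bar>x\<bar> \<le> K"
    using finite_int_set_bounded by blast
  have "\<bar>pcross (disp r) (Y k)\<bar> \<le> K + \<bar>pcross (disp r) A\<bar> + M" for k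
  proof (cases "k < n0")
    case True
    then have "\<bar>pcross (disp r) (Y k)\<bar> \<le> K"
      using K(2) by simp
    then show ?thesis
      using M[rule_format, of A 0] by simp
  next
    case False
    then show ?thesis
      using assms[of k] M[rule_format, of A "int (k - n0)"] K(1) by simp
  qed
  then show ?thesis
    by blast
qed

lemma walk_into_ray:
  assumes reach: "(c, A) \<in> {(x, y). bg_edge \<alpha> x y}\<^sup>*" and ray: "path_sub \<alpha> {0..} (per_pos A r)"
  obtains Y :: "nat \<Rightarrow> pt" and n0 K where "Y 0 = c" "\<forall>k. bg_edge \<alpha> (Y k) (Y (Suc k))"
    "\<And>i. 0 \<le> i \<Longrightarrow> Y (n0 + nat i) = per_pos A r i" "\<And>k. \<bar>pcross (disp r) (Y k)\<bar> \<le> K"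
proof -
  obtain n0 f where f: "f 0 = c" "f n0 = A" "\<forall>i<n0. bg_edge \<alpha> (f i) (f (Suc i))"
    using reach by (auto simp: rtrancl_power relpow_fun_conv)
  define Y where "Y k = (if k < n0 then f k else per_pos A r (int (k - n0)))" for k
  have "bg_edge \<alpha> (Y k) (Y (Suc k))" for k
  proof -
    consider "Suc k < n0" | "Suc k = n0" | "n0 \<le> k"
      by linarith
    then show ?thesis
    proof cases
      case 3
      then have "int (Suc k - n0) = int (k - n0) + 1"
        by simp
      with 3 show ?thesis
        using ray by (simp add: Y_def path_sub_def del: of_nat_diff)
    qed (use f in \<open>auto simp: Y_def\<close>)
  qed
  moreover have "Y 0 = c"
    using f by (cases "n0 = 0") (simp_all add: Y_def)
  moreover have "Y (n0 + nat i) = per_pos A r i" if "0 \<le> i" for i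
    using that by (simp add: Y_def)
  moreover obtain K where "\<forall>k. \<bar>pcross (disp r) (Y k)\<bar> \<le> K"
    using pcross_bounded_of_eventually_per_pos[of n0 Y A r] by (auto simp: Y_def)
  ultimately show thesis
    using that by blast
qed

section \<open>The maximal producible assembly\<close>

lemma producible_tile:
  assumes "producible T \<sigma> \<alpha>" and "x \<in> dom \<alpha>"
  shows "\<alpha> x \<in> Some ` insert \<sigma> T"
proof -
  obtain t where t: "\<alpha> x = Some t"
    using assms(2) by blast
  then have "t \<in> insert \<sigma> T"
    using assms(1) unfolding producible_def by (meson ranI subsetD)
  with t show ?thesis
    by blast
qed

lemma producible_connected:
  assumes "producible T \<sigma> \<alpha>" and "x \<in> dom \<alpha>" and "y \<in> dom \<alpha>"
  shows "(x, y) \<in> {(u, v). bg_edge \<alpha> u v}\<^sup>*"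
  using assms unfolding producible_def by (meson bg_rtrancl_sym rtrancl_trans)

lemma producible_restrict_avoid:
  assumes prod: "producible T \<sigma> \<alpha>" and w0: "w \<noteq> (0, 0)"
  shows "producible T \<sigma> (\<lambda>x. if ((0, 0), x) \<in> (bg_avoid \<alpha> w)\<^sup>* then \<alpha> x else None)"
    (is "producible T \<sigma> ?\<beta>")
proof -
  have "((0, 0), x) \<in> {(u, v). bg_edge ?\<beta> u v}\<^sup>*" if "((0, 0), x) \<in> (bg_avoid \<alpha> w)\<^sup>*" for x
    using that
  proof (induction rule: rtrancl_induct)
    case (step y z)
    have "((0, 0), z) \<in> (bg_avoid \<alpha> w)\<^sup>*"
      using step(1,2) by (rule rtrancl_into_rtrancl)
    then have "bg_edge ?\<beta> y z"
      using bg_edge_cong[of \<alpha> y z ?\<beta>] step(1,2) by (auto simp: bg_avoid_def)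
    with step.IH show ?case
      by (simp add: rtrancl_into_rtrancl)
  qed simp
  moreover have "ran ?\<beta> \<subseteq> ran \<alpha>"
    by (auto simp: ran_def split: if_splits)
  ultimately show ?thesis
    using prod by (auto simp: producible_def domIff split: if_splits)
qed

lemma producible_attach:
  assumes prod: "producible T \<sigma> \<beta>" and free: "\<beta> w = None"
    and u: "\<beta> u = Some t" and w: "w = padd u (dvec d)"
    and s: "s \<in> insert \<sigma> T" and glue: "t d = s (opp d)"
  shows "producible T \<sigma> (\<beta>(w \<mapsto> s))"
proof -
  have "bg_edge (\<beta>(w \<mapsto> s)) x y" if "bg_edge \<beta> x y" for x y
  proof (rule bg_edge_cong[OF that])
    show "(\<beta>(w \<mapsto> s)) x = \<beta> x" "(\<beta>(w \<mapsto> s)) y = \<beta> y"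
      using bg_edge_dom[OF that] free by auto
  qed
  then have "{(x, y). bg_edge \<beta> x y} \<subseteq> {(x, y). bg_edge (\<beta>(w \<mapsto> s)) x y}"
    by auto
  then have reach: "((0, 0), x) \<in> {(x, y). bg_edge (\<beta>(w \<mapsto> s)) x y}\<^sup>*" if "x \<in> dom \<beta>" for x
    using prod that unfolding producible_def by (meson rtrancl_mono subsetD)
  have "u \<noteq> w"
    using free u by auto
  then have "bg_edge (\<beta>(w \<mapsto> s)) u w"
    using u w glue by (auto simp: bg_edge_def binds_def)
  then have "((0, 0), w) \<in> {(x, y). bg_edge (\<beta>(w \<mapsto> s)) x y}\<^sup>*"
    using reach[of u] u by (auto intro: rtrancl_into_rtrancl)
  moreover have "ran (\<beta>(w \<mapsto> s)) \<subseteq> insert \<sigma> T"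
    using prod s free by (auto simp: producible_def ran_def)
  moreover have "(\<beta>(w \<mapsto> s)) (0, 0) = Some \<sigma>"
    using prod free by (auto simp: producible_def)
  ultimately show ?thesis
    using reach by (auto simp: producible_def)
qed

text \<open>A tile that can be attached next to a vertex \<open>u\<close> which the seed reaches without
  passing through the attachment site \<open>w\<close> is forced at \<open>w\<close>: restricting to the part reached
  avoiding \<open>w\<close> and attaching it yields a producible assembly, which the maximal one contains.\<close>

lemma max_producible_attach:
  assumes mx: "is_max_producible T \<sigma> \<alpha>"
    and reach: "((0, 0), u) \<in> (bg_avoid \<alpha> w)\<^sup>*" and w: "w = padd u (dvec d)" and w0: "w \<noteq> (0, 0)"
    and u: "\<alpha> u = Some t" and s: "s \<in> insert \<sigma> T" and glue: "t d = s (opp d)"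
  shows "\<alpha> w = Some s"
proof -
  define \<beta> where "\<beta> = (\<lambda>x. if ((0, 0), x) \<in> (bg_avoid \<alpha> w)\<^sup>* then \<alpha> x else None)"
  have "producible T \<sigma> \<beta>"
    using mx w0 by (simp add: \<beta>_def is_max_producible_def producible_restrict_avoid)
  moreover have "\<beta> w = None"
    using bg_avoid_rtrancl_avoids[of "(0, 0)" w \<alpha> w] w0 by (auto simp: \<beta>_def)
  moreover have "\<beta> u = Some t"
    using reach u by (simp add: \<beta>_def)
  ultimately have "producible T \<sigma> (\<beta>(w \<mapsto> s))"
    using w s glue by (rule producible_attach)
  then have "\<beta>(w \<mapsto> s) \<subseteq>\<^sub>m \<alpha>"
    using mx by (simp add: is_max_producible_def)
  then show ?thesis
    by (metis domI fun_upd_same map_le_def)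
qed

lemma walk_translate_avoid:
  assumes walk: "\<forall>k. bg_edge \<alpha> (Y k) (Y (Suc k))"
    and agree: "\<forall>j\<le>k. \<alpha> (padd (Y j) l) = \<alpha> (Y j)"
    and avoid: "\<forall>j\<le>k. padd (Y j) l \<noteq> w"
  shows "(padd (Y 0) l, padd (Y k) l) \<in> (bg_avoid \<alpha> w)\<^sup>*"
  using agree avoid
proof (induction k)
  case (Suc k)
  have "bg_edge \<alpha> (padd (Y k) l) (padd (Y (Suc k)) l)"
    using bg_edge_translate[OF walk[rule_format, of k]] Suc.prems by simp
  then have "(padd (Y k) l, padd (Y (Suc k)) l) \<in> bg_avoid \<alpha> w"
    using Suc.prems by (simp add: bg_avoid_def)
  with Suc show ?case
    by (auto intro: rtrancl_into_rtrancl)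
qed simp

lemma max_producible_copy_edge:
  assumes mx: "is_max_producible T \<sigma> \<alpha>" and edge: "bg_edge \<alpha> y y'"
    and agree: "\<alpha> (padd y l) = \<alpha> y"
    and reach: "((0, 0), padd y l) \<in> (bg_avoid \<alpha> (padd y' l))\<^sup>*" and w0: "padd y' l \<noteq> (0, 0)"
  shows "\<alpha> (padd y' l) = \<alpha> y'"
proof -
  obtain d t s where d: "y' = padd y (dvec d)" "\<alpha> y = Some t" "\<alpha> y' = Some s" "t d = s (opp d)"
    using edge by (auto simp: bg_edge_def binds_def)
  have s: "s \<in> insert \<sigma> T"
    using d(3) mx unfolding is_max_producible_def producible_def by (meson ranI subsetD)
  have wd: "padd y' l = padd (padd y l) (dvec d)"
    by (simp add: d(1) padd_def algebra_simps)
  have "\<alpha> (padd y l) = Some t"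
    using agree d(2) by simp
  then have "\<alpha> (padd y' l) = Some s"
    using max_producible_attach[where t = t and s = s, OF mx reach wd w0 _ s d(4)] by blast
  with d(3) show ?thesis
    by simp
qed

text \<open>Each new translated tile is forced by its translated predecessor, which the seed reaches
  avoiding it through the translated start and the part of the walk copied so far.\<close>

lemma max_producible_copy_walk:
  assumes mx: "is_max_producible T \<sigma> \<alpha>"
    and walk: "\<forall>k. bg_edge \<alpha> (Y k) (Y (Suc k))"
    and start: "\<alpha> (padd (Y 0) l) = \<alpha> (Y 0)"
    and route: "\<And>k. padd (Y k) l \<noteq> padd (Y 0) l \<Longrightarrow>
        padd (Y k) l \<noteq> (0, 0) \<and> ((0, 0), padd (Y 0) l) \<in> (bg_avoid \<alpha> (padd (Y k) l))\<^sup>*"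
  shows "\<alpha> (padd (Y k) l) = \<alpha> (Y k)"
proof -
  have "\<forall>j\<le>k. \<alpha> (padd (Y j) l) = \<alpha> (Y j)"
  proof (induction k)
    case 0
    show ?case
      using start by simp
  next
    case (Suc k)
    define w where "w = padd (Y (Suc k)) l"
    consider (old) j where "j \<le> k" "padd (Y j) l = w" | (new) "\<forall>j\<le>k. padd (Y j) l \<noteq> w"
      by blast
    then have "\<alpha> w = \<alpha> (Y (Suc k))"
    proof cases
      case old
      then have "Y j = Y (Suc k)"
        by (simp add: w_def padd_def prod_eq_iff)
      with old Suc.IH show ?thesis
        by auto
    next
      case new
      then have "w \<noteq> (0, 0)" and "((0, 0), padd (Y 0) l) \<in> (bg_avoid \<alpha> w)\<^sup>*"
        using route[of "Suc k"] by (auto simp: w_def)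
      moreover have "(padd (Y 0) l, padd (Y k) l) \<in> (bg_avoid \<alpha> w)\<^sup>*"
        using walk_translate_avoid[OF walk] Suc.IH new by blast
      ultimately show ?thesis
        using max_producible_copy_edge[OF mx walk[rule_format, of k]] Suc.IH
        by (simp add: w_def rtrancl_trans)
    qed
    with Suc.IH show ?case
      by (auto simp: w_def le_Suc_eq)
  qed
  then show ?thesis
    by simp
qed

text \<open>\<open>F\<close> contains every vertex whose removal could cut the seed off from \<open>g\<close>; the
  separation keeps the translated walk clear of \<open>F\<close>.\<close>

lemma max_producible_copy_walk_strip:
  assumes mx: "is_max_producible T \<sigma> \<alpha>"
    and F0: "(0, 0) \<in> F" and F: "\<forall>w\<in>F. \<bar>pcross v w\<bar> \<le> M"
    and robust: "\<And>w. w \<notin> F \<Longrightarrow> w \<noteq> g \<Longrightarrow> ((0, 0), g) \<in> (bg_avoid \<alpha> w)\<^sup>*"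
    and walk: "\<forall>k. bg_edge \<alpha> (Y k) (Y (Suc k))" and strip: "\<And>k. \<bar>pcross v (Y k)\<bar> \<le> K"
    and start: "padd (Y 0) l = g" "\<alpha> g = \<alpha> (Y 0)"
    and sep: "K + M < pcross v l"
  shows "\<alpha> (padd (Y k) l) = \<alpha> (Y k)"
  using mx walk
proof (rule max_producible_copy_walk)
  have far: "padd (Y k) l \<notin> F" for k
    using strip[of k] F sep by fastforce
  show "\<alpha> (padd (Y 0) l) = \<alpha> (Y 0)"
    using start by simp
  show "padd (Y k) l \<noteq> (0, 0) \<and> ((0, 0), padd (Y 0) l) \<in> (bg_avoid \<alpha> (padd (Y k) l))\<^sup>*"
    if "padd (Y k) l \<noteq> padd (Y 0) l" for k
    using far[of k] F0 robust[of "padd (Y k) l"] that start(1) by auto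
qed

section \<open>The grid\<close>

definition grid_pt :: "dir list \<Rightarrow> dir list \<Rightarrow> dir list \<Rightarrow> int \<Rightarrow> int \<Rightarrow> pt" where
  "grid_pt m p q i j = padd (disp m) (padd (psmul i (disp p)) (psmul j (disp q)))"

lemma grid_pt_swap: "grid_pt m p q i j = grid_pt m q p j i"
  by (simp add: grid_pt_def padd_def algebra_simps)

lemma grid_sub_iff:
  "grid_sub \<alpha> m p q \<longleftrightarrow>
    (\<forall>i j. path_sub \<alpha> UNIV (per_pos (grid_pt m p q i j) p) \<and> path_sub \<alpha> UNIV (per_pos (grid_pt m p q i j) q))"
  by (simp add: grid_sub_def grid_pt_def)

lemma grid_sub_swap: "grid_sub \<alpha> m p q \<Longrightarrow> grid_sub \<alpha> m q p"
  by (simp add: grid_sub_iff) (metis grid_pt_swap)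

lemma grid_ok_swap: "grid_ok m p q \<Longrightarrow> grid_ok m q p"
  by (auto simp: grid_ok_def algebra_simps)

lemma grid_ok_pcross: "grid_ok m p q \<Longrightarrow> pcross (disp p) (disp q) \<noteq> 0"
  by (simp add: grid_ok_def pcross_def)

lemma grid_ok_nonempty: "grid_ok m p q \<Longrightarrow> p \<noteq> []"
  by (simp add: grid_ok_def free_biinf_def)

lemma grid_sub_dom: "grid_sub \<alpha> m p q \<Longrightarrow> grid_pt m p q i j \<in> dom \<alpha>"
  by (simp add: grid_sub_iff path_sub_def) (metis per_pos_0)

lemma per_pos_grid_pt_row:
  "p \<noteq> [] \<Longrightarrow> per_pos (grid_pt m p q i j) p (t * int (length p)) = grid_pt m p q (i + t) j"
  by (simp add: per_pos_mult_length grid_pt_def padd_def psmul_def algebra_simps)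

lemma grid_row_meets_bounded:
  assumes indep: "pcross (disp p) (disp q) \<noteq> 0"
  shows "\<exists>B. \<forall>i j k. per_pos (grid_pt m p q i j) p k = w \<longrightarrow> \<bar>j\<bar> \<le> B"
proof -
  obtain M where M: "\<forall>X k. \<bar>pcross (disp p) (per_pos X p k) - pcross (disp p) X\<bar> \<le> M"
    using pcross_per_pos_bounded by blast
  have "\<bar>j\<bar> \<le> \<bar>pcross (disp p) w\<bar> + \<bar>pcross (disp p) (disp m)\<bar> + M"
    if "per_pos (grid_pt m p q i j) p k = w" for i j k
  proof -
    have "\<bar>j * pcross (disp p) (disp q)\<bar> \<le> \<bar>pcross (disp p) w\<bar> + \<bar>pcross (disp p) (disp m)\<bar> + M"
      using M[rule_format, of "grid_pt m p q i j" k] that by (simp add: grid_pt_def)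
    moreover have "1 \<le> \<bar>pcross (disp p) (disp q)\<bar>"
      using indep by linarith
    then have "\<bar>j\<bar> \<le> \<bar>j * pcross (disp p) (disp q)\<bar>"
      by (simp add: abs_mult mult_le_cancel_left1)
    ultimately show ?thesis
      by linarith
  qed
  then show ?thesis
    by blast
qed

lemma grid_row_avoid:
  assumes "p \<noteq> []" and "grid_sub \<alpha> m p q" and "\<forall>t. per_pos (grid_pt m p q i j) p t \<noteq> w"
  shows "(grid_pt m p q i j, grid_pt m p q i' j) \<in> (bg_avoid \<alpha> w)\<^sup>*"
proof -
  have "(per_pos (grid_pt m p q i j) p 0, per_pos (grid_pt m p q i j) p ((i' - i) * int (length p)))
      \<in> (bg_avoid \<alpha> w)\<^sup>*"
    using assms(2,3) by (intro path_sub_segment_avoid) (auto simp: grid_sub_iff)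
  then show ?thesis
    using per_pos_grid_pt_row[OF assms(1), of m q i j "i' - i"] by simp
qed

text \<open>A free bi-infinite periodic walk meets \<open>w\<close> at most once, so one of its two halves
  avoids it.\<close>

lemma free_biinf_half_avoids:
  assumes fb: "free_biinf p" and w: "w \<noteq> X"
  obtains s :: int where "s = 1 \<or> s = -1" "\<And>t. 0 \<le> s * t \<Longrightarrow> per_pos X p t \<noteq> w"
proof (cases "\<exists>k>0. per_pos X p k = w")
  case True
  then obtain k where "k > 0" "per_pos X p k = w"
    by blast
  then have "per_pos X p t \<noteq> w" if "0 \<le> -1 * t" for t
    using that per_pos_eq_iff[OF fb, of X t k] by auto
  then show ?thesis
    using that by blast
next
  case False
  then have "per_pos X p t \<noteq> w" if "0 \<le> 1 * t" for t
    using that w by (cases "t = 0") auto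
  then show ?thesis
    using that by blast
qed

lemma grid_row_escape:
  assumes ok: "grid_ok m p q" and gs: "grid_sub \<alpha> m p q" and w: "w \<noteq> grid_pt m p q a b"
  shows "\<exists>i. C < \<bar>i\<bar> \<and> (grid_pt m p q a b, grid_pt m p q i b) \<in> (bg_avoid \<alpha> w)\<^sup>*"
proof -
  let ?X = "grid_pt m p q a b"
  let ?n = "int (length p)"
  have fb: "free_biinf p"
    using ok by (simp add: grid_ok_def)
  obtain s :: int where s: "s = 1 \<or> s = -1" and clear: "\<And>t. 0 \<le> s * t \<Longrightarrow> per_pos ?X p t \<noteq> w"
    using free_biinf_half_avoids[OF fb w] by blast
  define c where "c = \<bar>a\<bar> + \<bar>C\<bar> + 1"
  have "0 \<le> c * ?n"
    by (simp add: c_def)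
  have "\<forall>t. min 0 (s * c * ?n) \<le> t \<and> t \<le> max 0 (s * c * ?n) \<longrightarrow> per_pos ?X p t \<noteq> w"
  proof (intro allI impI)
    fix t
    assume "min 0 (s * c * ?n) \<le> t \<and> t \<le> max 0 (s * c * ?n)"
    then have "0 \<le> s * t"
      using s \<open>0 \<le> c * ?n\<close> by auto
    then show "per_pos ?X p t \<noteq> w"
      by (rule clear)
  qed
  then have "(per_pos ?X p 0, per_pos ?X p ((s * c) * ?n)) \<in> (bg_avoid \<alpha> w)\<^sup>*"
    using gs by (intro path_sub_segment_avoid) (auto simp: grid_sub_iff)
  then have "(?X, grid_pt m p q (a + s * c) b) \<in> (bg_avoid \<alpha> w)\<^sup>*"
    using per_pos_grid_pt_row[OF grid_ok_nonempty[OF ok]] by simp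
  moreover have "C < \<bar>a + s * c\<bar>"
    using s by (auto simp: c_def)
  ultimately show ?thesis
    by blast
qed

text \<open>Go out along the row of the first point to a column missing \<open>w\<close>, and out along the
  column of the second point to a row missing \<open>w\<close>; these two lines cross.\<close>

lemma grid_connected_avoid:
  assumes ok: "grid_ok m p q" and gs: "grid_sub \<alpha> m p q"
    and w: "w \<noteq> grid_pt m p q a b" "w \<noteq> grid_pt m p q a' b'"
  shows "(grid_pt m p q a b, grid_pt m p q a' b') \<in> (bg_avoid \<alpha> w)\<^sup>*"
proof -
  have ok': "grid_ok m q p" and gs': "grid_sub \<alpha> m q p"
    using ok gs by (auto intro: grid_ok_swap grid_sub_swap)
  obtain Bp where Bp: "\<And>i j k. per_pos (grid_pt m p q i j) p k = w \<Longrightarrow> \<bar>j\<bar> \<le> Bp"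
    using grid_row_meets_bounded[OF grid_ok_pcross[OF ok]] by blast
  obtain Bq where Bq: "\<And>i j k. per_pos (grid_pt m q p i j) q k = w \<Longrightarrow> \<bar>j\<bar> \<le> Bq"
    using grid_row_meets_bounded[OF grid_ok_pcross[OF ok']] by blast
  obtain i where i: "Bq < \<bar>i\<bar>" "(grid_pt m p q a b, grid_pt m p q i b) \<in> (bg_avoid \<alpha> w)\<^sup>*"
    using grid_row_escape[OF ok gs w(1)] by blast
  have "w \<noteq> grid_pt m q p b' a'"
    using w(2) by (simp add: grid_pt_swap[of m p q])
  then obtain j where j: "Bp < \<bar>j\<bar>" "(grid_pt m q p b' a', grid_pt m q p j a') \<in> (bg_avoid \<alpha> w)\<^sup>*"
    using grid_row_escape[OF ok' gs'] by blast
  have "(grid_pt m q p b i, grid_pt m q p j i) \<in> (bg_avoid \<alpha> w)\<^sup>*"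
    using grid_row_avoid[OF grid_ok_nonempty[OF ok'] gs'] Bq i(1) by (meson not_le)
  then have "(grid_pt m p q i b, grid_pt m p q i j) \<in> (bg_avoid \<alpha> w)\<^sup>*"
    by (simp only: grid_pt_swap[of m q p])
  moreover have "(grid_pt m p q i j, grid_pt m p q a' j) \<in> (bg_avoid \<alpha> w)\<^sup>*"
    using grid_row_avoid[OF grid_ok_nonempty[OF ok] gs] Bp j(1) by (meson not_le)
  moreover have "(grid_pt m p q a' j, grid_pt m p q a' b') \<in> (bg_avoid \<alpha> w)\<^sup>*"
    using bg_avoid_rtrancl_sym[OF j(2)] by (simp only: grid_pt_swap[of m q p])
  ultimately show ?thesis
    using i(2) by (meson rtrancl_trans)
qed

lemma grid_reachable_avoid_cofinite:
  assumes prod: "producible T \<sigma> \<alpha>" and ok: "grid_ok m p q" and gs: "grid_sub \<alpha> m p q"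
  obtains F where "finite F" "(0, 0) \<in> F"
    "\<And>w i j. w \<notin> F \<Longrightarrow> w \<noteq> grid_pt m p q i j \<Longrightarrow> ((0, 0), grid_pt m p q i j) \<in> (bg_avoid \<alpha> w)\<^sup>*"
proof -
  have "((0, 0), grid_pt m p q 0 0) \<in> {(x, y). bg_edge \<alpha> x y}\<^sup>*"
    using prod grid_sub_dom[OF gs] by (simp add: producible_def)
  from rtrancl_bg_avoid_cofinite[OF this] obtain F where F: "finite F" "(0, 0) \<in> F" "grid_pt m p q 0 0 \<in> F"
      "\<And>w. w \<notin> F \<Longrightarrow> ((0, 0), grid_pt m p q 0 0) \<in> (bg_avoid \<alpha> w)\<^sup>*"
    by blast
  show thesis
  proof (rule that[OF F(1,2)])
    fix w i j
    assume w: "w \<notin> F" "w \<noteq> grid_pt m p q i j"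
    then have "(grid_pt m p q 0 0, grid_pt m p q i j) \<in> (bg_avoid \<alpha> w)\<^sup>*"
      using F(3) by (intro grid_connected_avoid[OF ok gs]) auto
    with F(4)[OF w(1)] show "((0, 0), grid_pt m p q i j) \<in> (bg_avoid \<alpha> w)\<^sup>*"
      by (rule rtrancl_trans)
  qed
qed

text \<open>With \<open>x = pcross v P\<close>, \<open>y = pcross v Q\<close> and \<open>D = pcross P Q\<close> (\<open>P, Q\<close> the periods of
  the grid), Cramer's rule gives \<open>D\<^sup>2 v = D y P - D x Q\<close>: the index step \<open>(-D y, D x)\<close>
  moves by \<open>-D\<^sup>2 v\<close>, while the step \<open>(x, y)\<close> raises \<open>pcross v\<close> by \<open>x\<^sup>2 + y\<^sup>2\<close>.\<close>

lemma grid_lattice_along: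
  assumes indep: "pcross (disp p) (disp q) \<noteq> 0" and v: "v \<noteq> (0, 0)"
  obtains z :: "nat \<Rightarrow> nat \<Rightarrow> pt" and \<phi> c0 c :: int
  where "\<phi> > 0" "c > 0"
    "\<And>a k. \<exists>i j. z a k = grid_pt m p q i j"
    "\<And>a k. pcross v (z a k) = c0 + int a * \<phi>"
    "\<And>a k. z a k = padd (z a 0) (psmul (- (int k * c)) v)"
proof -
  define D where "D = pcross (disp p) (disp q)"
  define x where "x = pcross v (disp p)"
  define y where "y = pcross v (disp q)"
  define z where "z = (\<lambda>a k. grid_pt m p q (int a * x - int k * (D * y)) (int a * y + int k * (D * x)))"
  have "x \<noteq> 0 \<or> y \<noteq> 0"
    using pcross_nonzero_of_independent[OF indep v] by (simp add: x_def y_def)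
  then have "x * x + y * y > 0"
    by (simp add: sum_squares_gt_zero_iff)
  moreover have "D * D > 0"
    using indep by (auto simp: D_def zero_less_mult_iff)
  moreover have "\<exists>i j. z a k = grid_pt m p q i j" for a k
    by (auto simp: z_def)
  moreover have "pcross v (z a k) = pcross v (disp m) + int a * (x * x + y * y)" for a k
    by (simp add: z_def grid_pt_def x_def y_def algebra_simps)
  moreover have "z a k = padd (z a 0) (psmul (- (int k * (D * D))) v)" for a k
  proof -
    have "D * D * fst v = D * y * fst (disp p) - D * x * fst (disp q)"
      "D * D * snd v = D * y * snd (disp p) - D * x * snd (disp q)"
      using pcross_cramer[of "disp p" "disp q" v] by (simp_all add: D_def x_def y_def)
    then show ?thesis
      by (simp add: z_def grid_pt_def padd_def psmul_def) algebra
  qed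
  ultimately show thesis
    by (rule that)
qed

lemma infinite_rows_with_common_value:
  fixes f :: "nat \<Rightarrow> nat \<Rightarrow> 'b"
  assumes "finite X" and "\<And>a k. f a k \<in> X"
  shows "\<exists>x. infinite {a. infinite {k. f a k = x}}"
proof -
  have "\<exists>x. infinite {k. f a k = x}" for a
    using pigeonhole_infinite[of "UNIV :: nat set" "f a"] finite_subset[of "range (f a)" X] assms
    by auto
  then obtain g where g: "\<And>a. infinite {k. f a k = g a}"
    by metis
  have "g a \<in> X" for a
    using g[of a] assms(2) by (metis (mono_tags) empty_Collect_eq finite.emptyI)
  then have "finite (range g)"
    using assms(1) by (meson finite_subset image_subsetI)
  then obtain x where "infinite {a. g a = x}"
    using pigeonhole_infinite[of "UNIV :: nat set" g] by auto
  moreover have "{a. g a = x} \<subseteq> {a. infinite {k. f a k = x}}"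
    using g by auto
  ultimately show ?thesis
    using infinite_super by blast
qed

lemma grid_rows_recurrent_tile:
  assumes "finite T" and prod: "producible T \<sigma> \<alpha>" and ok: "grid_ok m p q"
    and gs: "grid_sub \<alpha> m p q" and v: "v \<noteq> (0, 0)"
  obtains z :: "nat \<Rightarrow> nat \<Rightarrow> pt" and \<phi> c0 c :: int and a1 k1 where "\<phi> > 0" "c > 0"
    "\<And>a k. \<exists>i j. z a k = grid_pt m p q i j"
    "\<And>a k. pcross v (z a k) = c0 + int a * \<phi>"
    "\<And>a k. z a k = padd (z a 0) (psmul (- (int k * c)) v)"
    "infinite {a. infinite {k. \<alpha> (z a k) = \<alpha> (z a1 k1)}}"
proof -
  obtain z \<phi> c0 c where z: "\<phi> > 0" "c > 0" "\<And>a k. \<exists>i j. z a k = grid_pt m p q i j"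
      "\<And>a k. pcross v (z a k) = c0 + int a * \<phi>"
      "\<And>a k. z a k = padd (z a 0) (psmul (- (int k * c)) v)"
    by (rule grid_lattice_along[OF grid_ok_pcross[OF ok] v]) (rule that)
  have "\<alpha> (z a k) \<in> Some ` insert \<sigma> T" for a k
  proof -
    obtain i j where "z a k = grid_pt m p q i j"
      using z(3) by blast
    then show ?thesis
      using producible_tile[OF prod grid_sub_dom[OF gs]] by simp
  qed
  then obtain x where R: "infinite {a. infinite {k. \<alpha> (z a k) = x}}"
    using infinite_rows_with_common_value[of "Some ` insert \<sigma> T" "\<lambda>a k. \<alpha> (z a k)"] assms(1)
    by blast
  then obtain a1 where "infinite {k. \<alpha> (z a1 k) = x}"
    by (auto dest: not_finite_existsD)
  then obtain k1 where x: "\<alpha> (z a1 k1) = x"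
    by (auto dest: not_finite_existsD)
  from R have "infinite {a. infinite {k. \<alpha> (z a k) = \<alpha> (z a1 k1)}}"
    by (simp add: x)
  then show thesis
    by (rule that[OF z])
qed

section \<open>Bi-infinite periodic paths\<close>

lemma max_producible_ray_translates:
  assumes "finite T" and mx: "is_max_producible T \<sigma> \<alpha>"
    and ok: "grid_ok m p q" and gs: "grid_sub \<alpha> m p q"
    and v: "disp r \<noteq> (0, 0)" and ray: "path_sub \<alpha> {0..} (per_pos A r)"
  obtains l0 c Ks where "c > 0" "infinite Ks"
    "\<And>k i. k \<in> Ks \<Longrightarrow> 0 \<le> i \<Longrightarrow>
       \<alpha> (padd (per_pos A r i) (padd l0 (psmul (- (int k * c)) (disp r)))) = \<alpha> (per_pos A r i)"
proof -
  have prod: "producible T \<sigma> \<alpha>"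
    using mx by (simp add: is_max_producible_def)
  obtain F where F: "finite F" "(0, 0) \<in> F"
      "\<And>w i j. w \<notin> F \<Longrightarrow> w \<noteq> grid_pt m p q i j \<Longrightarrow> ((0, 0), grid_pt m p q i j) \<in> (bg_avoid \<alpha> w)\<^sup>*"
    using grid_reachable_avoid_cofinite[OF prod ok gs] by blast
  obtain M where M: "\<forall>w\<in>F. \<bar>pcross (disp r) w\<bar> \<le> M"
    using finite_int_set_bounded[of "pcross (disp r) ` F"] F(1) by auto
  obtain z \<phi> c0 c a1 k1 where z: "\<phi> > 0" "c > 0" "\<And>a k. \<exists>i j. z a k = grid_pt m p q i j"
      "\<And>a k. pcross (disp r) (z a k) = c0 + int a * \<phi>"
      "\<And>a k. z a k = padd (z a 0) (psmul (- (int k * c)) (disp r))"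
      and R: "infinite {a. infinite {k. \<alpha> (z a k) = \<alpha> (z a1 k1)}}"
    by (rule grid_rows_recurrent_tile[OF assms(1) prod ok gs v]) (rule that)
  have zdom: "z a k \<in> dom \<alpha>" for a k
    using z(3)[of a k] grid_sub_dom[OF gs] by metis
  have "A \<in> dom \<alpha>"
    using ray per_pos_0[of A r] unfolding path_sub_def by (metis atLeast_iff order_refl)
  then have "(z a1 k1, A) \<in> {(x, y). bg_edge \<alpha> x y}\<^sup>*"
    using producible_connected[OF prod zdom] by simp
  then obtain Y n0 K where Y: "Y 0 = z a1 k1" "\<forall>k. bg_edge \<alpha> (Y k) (Y (Suc k))"
      "\<And>i. 0 \<le> i \<Longrightarrow> Y (n0 + nat i) = per_pos A r i" "\<And>k. \<bar>pcross (disp r) (Y k)\<bar> \<le> K"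
    using walk_into_ray[OF _ ray] by blast
  have "\<exists>a2\<ge>a1 + nat (K + M + 1). a2 \<in> {a. infinite {k. \<alpha> (z a k) = \<alpha> (z a1 k1)}}"
    using R by (meson infinite_nat_iff_unbounded_le)
  then obtain a2 where a2: "infinite {k. \<alpha> (z a2 k) = \<alpha> (z a1 k1)}" "a1 + nat (K + M + 1) \<le> a2"
    by blast
  define l0 where "l0 = padd (z a2 0) (psmul (-1) (z a1 k1))"
  define l where "l k = padd l0 (psmul (- (int k * c)) (disp r))" for k
  have start: "padd (Y 0) (l k) = z a2 k" for k
    using z(5)[of a2 k] by (simp add: Y(1) l_def l0_def padd_def psmul_def)
  have sep: "K + M < pcross (disp r) (l k)" for k
  proof -
    have "K + M + 1 \<le> int a2 - int a1"
      using a2(2) by linarith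
    also have "\<dots> \<le> (int a2 - int a1) * \<phi>"
      using a2(2) z(1) by (simp add: mult_le_cancel_left1)
    also have "\<dots> = pcross (disp r) (l k)"
      using z(4)[of a2 0] z(4)[of a1 k1] by (simp add: l_def l0_def algebra_simps)
    finally show ?thesis
      by simp
  qed
  have copy: "\<alpha> (padd (Y j) (l k)) = \<alpha> (Y j)" if "\<alpha> (z a2 k) = \<alpha> (z a1 k1)" for j k
  proof -
    obtain i' j' where "z a2 k = grid_pt m p q i' j'"
      using z(3) by blast
    then have robust: "\<And>w. w \<notin> F \<Longrightarrow> w \<noteq> z a2 k \<Longrightarrow> ((0, 0), z a2 k) \<in> (bg_avoid \<alpha> w)\<^sup>*"
      using F(3) by simp
    have "\<alpha> (z a2 k) = \<alpha> (Y 0)"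
      using that Y(1) by simp
    from max_producible_copy_walk_strip[OF mx F(2) M robust Y(2) Y(4) start[of k] this sep[of k]]
    show ?thesis .
  qed
  show thesis
  proof (rule that[OF z(2) a2(1)])
    show "\<alpha> (padd (per_pos A r i) (padd l0 (psmul (- (int k * c)) (disp r)))) = \<alpha> (per_pos A r i)"
      if "k \<in> {k. \<alpha> (z a2 k) = \<alpha> (z a1 k1)}" and "0 \<le> i" for k i
      using copy[of k "n0 + nat i"] that Y(3) by (simp add: l_def)
  qed
qed

lemma path_sub_UNIV_of_ray_translates:
  assumes r: "r \<noteq> []" and ray: "path_sub \<alpha> {0..} (per_pos A r)" and c: "c > 0"
    and Ks: "infinite Ks"
    and copies: "\<And>k i. k \<in> Ks \<Longrightarrow> 0 \<le> i \<Longrightarrow>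
       \<alpha> (padd (per_pos A r i) (padd l0 (psmul (- (int k * c)) (disp r)))) = \<alpha> (per_pos A r i)"
  shows "path_sub \<alpha> UNIV (per_pos (padd A l0) r)"
proof -
  define l where "l k = padd l0 (psmul (- (int k * c)) (disp r))" for k
  define s where "s k = int k * c * int (length r)" for k
  have shift: "per_pos (padd A l0) r j = padd (per_pos A r (j + s k)) (l k)" for j k
    using per_pos_shift[OF r, of A j "int k * c"] per_pos_translate[of A l0 r j]
    by (simp add: l_def s_def padd_def psmul_def algebra_simps)
  have "per_pos (padd A l0) r j \<in> dom \<alpha> \<and>
      bg_edge \<alpha> (per_pos (padd A l0) r j) (per_pos (padd A l0) r (j + 1))" for j
  proof -
    obtain k where k: "k \<in> Ks" "nat \<bar>j\<bar> \<le> k"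
      using Ks by (meson infinite_nat_iff_unbounded_le)
    have "1 \<le> c * int (length r)"
      using mult_mono[of 1 c 1 "int (length r)"] r c by (simp add: Suc_le_eq)
    then have "int k \<le> s k"
      by (simp add: s_def mult.assoc mult_le_cancel_left1)
    then have i: "0 \<le> j + s k"
      using k(2) by linarith
    have copy: "\<alpha> (padd (per_pos A r (j + s k)) (l k)) = \<alpha> (per_pos A r (j + s k))"
      "\<alpha> (padd (per_pos A r (j + s k + 1)) (l k)) = \<alpha> (per_pos A r (j + s k + 1))"
      using copies[OF k(1)] i by (simp_all add: l_def)
    have dom: "per_pos A r (j + s k) \<in> dom \<alpha>"
      and edge: "bg_edge \<alpha> (per_pos A r (j + s k)) (per_pos A r (j + s k + 1))"
      using ray i by (simp_all add: path_sub_def)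
    have "per_pos (padd A l0) r (j + 1) = padd (per_pos A r (j + s k + 1)) (l k)"
      using shift[of "j + 1" k] by (simp add: algebra_simps)
    then show ?thesis
      using shift[of j k] dom copy bg_edge_translate[OF edge copy] by (simp add: domIff)
  qed
  then show ?thesis
    by (simp add: path_sub_def)
qed

theorem mainTheorem9:
  fixes T :: "'g tile set" and \<sigma> :: "'g tile" and \<alpha>max :: "'g assembly"
    and m p q r :: "dir list" and A :: pt
  assumes "finite T"
    and "confluent T \<sigma>"
    and "is_max_producible T \<sigma> \<alpha>max"
    and "grid_ok m p q"
    and "grid_sub \<alpha>max m p q"
    and "r \<noteq> []" and "free_fin r"
    and "path_sub \<alpha>max {0..} (per_pos A r)"
  shows "\<exists>B. path_sub \<alpha>max UNIV (per_pos B r)"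
proof -
  have "disp r \<noteq> (0, 0)"
    using assms(6,7) by (rule disp_nonzero[rotated])
  then obtain l0 c Ks where "c > 0" "infinite Ks"
    "\<And>k i. k \<in> Ks \<Longrightarrow> 0 \<le> i \<Longrightarrow>
       \<alpha>max (padd (per_pos A r i) (padd l0 (psmul (- (int k * c)) (disp r)))) = \<alpha>max (per_pos A r i)"
    by (rule max_producible_ray_translates[OF assms(1,3,4,5) _ assms(8)]) (rule that)
  then have "path_sub \<alpha>max UNIV (per_pos (padd A l0) r)"
    by (rule path_sub_UNIV_of_ray_translates[OF assms(6,8)])
  then show ?thesis
    by blast
qed

end
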